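(* Let $G$ be a group and $H\subseteq G$ a maximal subgroup which is non-abelian simple, of finite index $p=[G:H]$, and suppose $G$ contains an element of order $p$. If the inclusion $H\subseteq G$ is a localization, then $G$ is simple.
   Context: A group homomorphism $i\colon H\to G$ is a localization if for every homomorphism $\varphi\colon H\to G$ there exists a unique homomorphism $\psi\colon G\to G$ with $\psi\circ i=\varphi$; for $H\subseteq G$, "$H\subseteq G$ is a localization" means the inclusion map is. *)

theory Defs
  imports "HOL-Algebra.Algebra"
begin

text \<open>A group is simple if it is nontrivial and has no normal subgroups other than
  the trivial subgroup and itself. (No finiteness assumed, unlike the library
  locale simple_group, which requires order G > 1 and hence finiteness.)\<close>
definition is_simple_group :: "('a, 'b) monoid_scheme \<Rightarrow> bool" where
  "is_simple_group G \<longleftrightarrow> group G \<and> carrier G \<noteq> {\<one>\<^bsub>G\<^esub>} \<and>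
     (\<forall>N. N \<lhd> G \<longrightarrow> N = {\<one>\<^bsub>G\<^esub>} \<or> N = carrier G)"

definition maximal_subgroup :: "'a set \<Rightarrow> ('a, 'b) monoid_scheme \<Rightarrow> bool" where
  "maximal_subgroup H G \<longleftrightarrow> subgroup H G \<and> H \<noteq> carrier G \<and>
     (\<forall>K. subgroup K G \<longrightarrow> H \<subseteq> K \<longrightarrow> K = H \<or> K = carrier G)"

definition inclusion_is_localization :: "'a set \<Rightarrow> ('a, 'b) monoid_scheme \<Rightarrow> bool" where
  "inclusion_is_localization H G \<longleftrightarrow>
     (\<forall>\<phi> \<in> hom (G\<lparr>carrier := H\<rparr>) G.
        \<exists>\<psi> \<in> hom G G. (\<forall>h\<in>H. \<psi> h = \<phi> h) \<and>
          (\<forall>\<psi>' \<in> hom G G. (\<forall>h\<in>H. \<psi>' h = \<phi> h) \<longrightarrow> (\<forall>x\<in>carrier G. \<psi>' x = \<psi> x)))"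

end

theory Submission
  imports Defs
begin

text \<open>Let \<open>N \<lhd> G\<close>. Simplicity of \<open>H\<close> leaves two cases for \<open>N \<inter> H\<close>.
  If \<open>N \<inter> H = 1\<close>, maximality gives \<open>NH = H\<close> (so \<open>N = 1\<close>) or \<open>G = N \<rtimes> H\<close>;
  in the latter case the projection onto \<open>H\<close> and the identity are two endomorphisms
  extending the inclusion of \<open>H\<close>, so uniqueness forces \<open>N = 1\<close>.
  If \<open>H \<subseteq> N\<close>, maximality gives \<open>N = G\<close> or \<open>N = H\<close>. In the latter case \<open>G/H\<close> has no
  proper nontrivial subgroups, hence is cyclic of order \<open>p\<close>, and sending its generator to an
  element of order \<open>p\<close> yields an endomorphism of \<open>G\<close> that is trivial on \<open>H\<close> but not on \<open>G\<close>,
  contradicting uniqueness of the extension of the trivial homomorphism.\<close>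

lemma hom_restrict_carrier:
  assumes "f \<in> hom G K" "H \<subseteq> carrier G"
  shows "f \<in> hom (G\<lparr>carrier := H\<rparr>) K"
  using assms by (auto simp: hom_def)

lemma localization_endomorphisms_eqI:
  assumes "inclusion_is_localization H G" "H \<subseteq> carrier G"
    and "\<psi>\<^sub>1 \<in> hom G G" "\<psi>\<^sub>2 \<in> hom G G" "\<And>h. h \<in> H \<Longrightarrow> \<psi>\<^sub>1 h = \<psi>\<^sub>2 h"
    and "x \<in> carrier G"
  shows "\<psi>\<^sub>1 x = \<psi>\<^sub>2 x"
proof -
  obtain \<psi> where unique: "\<forall>\<psi>' \<in> hom G G. (\<forall>h\<in>H. \<psi>' h = \<psi>\<^sub>2 h) \<longrightarrow> (\<forall>x\<in>carrier G. \<psi>' x = \<psi> x)"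
    using assms(1) hom_restrict_carrier[OF assms(4,2)]
    unfolding inclusion_is_localization_def by fast
  show ?thesis
    using unique[rule_format, OF assms(3,5,6)] unique[rule_format, OF assms(4) refl assms(6)]
    by simp
qed

lemma (in group) complement_projection_hom:
  assumes N: "N \<lhd> G" and H: "subgroup H G"
    and NH: "N \<inter> H = {\<one>}" and NHG: "N <#> H = carrier G"
  obtains \<pi> where "\<pi> \<in> hom G G" "\<And>n. n \<in> N \<Longrightarrow> \<pi> n = \<one>" "\<And>h. h \<in> H \<Longrightarrow> \<pi> h = h"
proof -
  interpret N: normal N G by fact
  interpret H: subgroup H G by fact
  have factor_unique: "h = h'"
    if "n \<in> N" "h \<in> H" "n' \<in> N" "h' \<in> H" "n \<otimes> h = n' \<otimes> h'" for n h n' h'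
  proof -
    have carrier: "n \<in> carrier G" "h \<in> carrier G" "n' \<in> carrier G" "h' \<in> carrier G"
      using that by auto
    have "inv n' \<otimes> n = inv n' \<otimes> (n \<otimes> h) \<otimes> inv h"
      using carrier by (simp add: m_assoc)
    also have "\<dots> = h' \<otimes> inv h"
      using carrier that(5) by (simp flip: m_assoc)
    finally have "inv n' \<otimes> n = h' \<otimes> inv h" .
    moreover have "inv n' \<otimes> n \<in> N" "h' \<otimes> inv h \<in> H"
      using that by auto
    ultimately have "h' \<otimes> inv h = \<one>"
      using NH by auto
    then show ?thesis
      using carrier by (simp add: inv_solve_right')
  qed
  define \<pi> where "\<pi> x = (THE h. h \<in> H \<and> (\<exists>n\<in>N. x = n \<otimes> h))" for x
  have \<pi>_factor: "\<pi> (n \<otimes> h) = h" if "n \<in> N" "h \<in> H" for n h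
    unfolding \<pi>_def by (rule the_equality) (use that factor_unique in blast)+
  have factor: "\<exists>n\<in>N. \<exists>h\<in>H. x = n \<otimes> h" if "x \<in> carrier G" for x
    using that NHG unfolding set_mult_def by blast
  have "\<pi> \<in> hom G G"
  proof (rule homI)
    fix x assume "x \<in> carrier G"
    then obtain n h where "n \<in> N" "h \<in> H" "x = n \<otimes> h"
      using factor by blast
    then show "\<pi> x \<in> carrier G"
      using \<pi>_factor by auto
  next
    fix x y assume "x \<in> carrier G" "y \<in> carrier G"
    obtain n h n' h' where fac: "n \<in> N" "h \<in> H" "x = n \<otimes> h" "n' \<in> N" "h' \<in> H" "y = n' \<otimes> h'"
      using factor[OF \<open>x \<in> carrier G\<close>] factor[OF \<open>y \<in> carrier G\<close>] by blast
    then have carrier: "h \<in> carrier G" "h' \<in> carrier G" "n \<in> carrier G" "n' \<in> carrier G"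
      by auto
    then have "inv h \<otimes> (h \<otimes> h') = h'"
      by (simp flip: m_assoc)
    then have "x \<otimes> y = (n \<otimes> (h \<otimes> n' \<otimes> inv h)) \<otimes> (h \<otimes> h')"
      using fac carrier by (simp add: m_assoc)
    moreover have "n \<otimes> (h \<otimes> n' \<otimes> inv h) \<in> N" "h \<otimes> h' \<in> H"
      using fac N.m_closed[OF fac(1) N.inv_op_closed2[OF carrier(1) fac(4)]] by auto
    ultimately show "\<pi> (x \<otimes> y) = \<pi> x \<otimes> \<pi> y"
      using fac \<pi>_factor by simp
  qed
  moreover have "\<pi> n = \<one>" if "n \<in> N" for n
    using \<pi>_factor[of n \<one>] that by simp
  moreover have "\<pi> h = h" if "h \<in> H" for h
    using \<pi>_factor[of \<one> h] that by simp
  ultimately show thesis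
    using that by blast
qed

lemma (in group) localization_normal_complement_trivial:
  assumes L: "inclusion_is_localization H G" and H: "subgroup H G" and N: "N \<lhd> G"
    and "N \<inter> H = {\<one>}" "N <#> H = carrier G"
  shows "N = {\<one>}"
proof -
  interpret N: normal N G by fact
  obtain \<pi> where \<pi>: "\<pi> \<in> hom G G" "\<And>n. n \<in> N \<Longrightarrow> \<pi> n = \<one>" "\<And>h. h \<in> H \<Longrightarrow> \<pi> h = h"
    using complement_projection_hom[OF N H assms(4,5)] by blast
  have id: "(\<lambda>x. x) \<in> hom G G"
    by (auto simp: hom_def)
  have "n = \<pi> n" if "n \<in> N" for n
  proof (rule localization_endomorphisms_eqI[OF L subgroup.subset[OF H] id \<pi>(1)])
    show "\<And>h. h \<in> H \<Longrightarrow> h = \<pi> h"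
      using \<pi>(3) by simp
    show "n \<in> carrier G"
      using that by simp
  qed
  then have "n = \<one>" if "n \<in> N" for n
    using that \<pi>(2) by simp
  then show ?thesis
    by auto
qed

lemma (in group) cyclic_group_hom_exists:
  assumes K: "group K" and a: "a \<in> carrier G" and gen: "carrier G = range (\<lambda>k::int. a [^] k)"
    and g: "g \<in> carrier K" "group.ord K g dvd ord a"
  obtains f where "f \<in> hom G K" "f a = g"
proof -
  interpret K: group K by fact
  define e where "e y = (SOME k::int. y = a [^] k)" for y
  have e: "a [^] e y = y" if y: "y \<in> carrier G" for y
  proof -
    obtain k :: int where "y = a [^] k"
      using y gen by auto
    then show ?thesis
      unfolding e_def by (metis (mono_tags) someI)
  qed
  have transfer: "g [^]\<^bsub>K\<^esub> k = g [^]\<^bsub>K\<^esub> l" if "a [^] k = a [^] l" for k l :: int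
  proof -
    have "int (ord a) dvd l - k"
      using that int_pow_eq[OF a] by simp
    moreover have "int (K.ord g) dvd int (ord a)"
      using g(2) by simp
    ultimately show ?thesis
      using K.int_pow_eq[OF g(1)] dvd_trans by blast
  qed
  define f where "f y = g [^]\<^bsub>K\<^esub> e y" for y
  have "f \<in> hom G K"
  proof (rule homI)
    fix y assume "y \<in> carrier G"
    then show "f y \<in> carrier K"
      unfolding f_def using g by simp
  next
    fix y z assume yz: "y \<in> carrier G" "z \<in> carrier G"
    have "a [^] e (y \<otimes> z) = a [^] e y \<otimes> a [^] e z"
      using yz by (simp add: e)
    also have "\<dots> = a [^] (e y + e z)"
      using a by (simp add: int_pow_mult)
    finally have "g [^]\<^bsub>K\<^esub> e (y \<otimes> z) = g [^]\<^bsub>K\<^esub> (e y + e z)"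
      by (rule transfer)
    then show "f (y \<otimes> z) = f y \<otimes>\<^bsub>K\<^esub> f z"
      unfolding f_def using g by (simp add: K.int_pow_mult)
  qed
  moreover have "f a = g"
  proof -
    have "a [^] e a = a [^] (1::int)"
      using a by (simp add: e)
    then have "g [^]\<^bsub>K\<^esub> e a = g [^]\<^bsub>K\<^esub> (1::int)"
      by (rule transfer)
    then show ?thesis
      unfolding f_def using g by simp
  qed
  ultimately show thesis
    using that by blast
qed

lemma (in normal) maximal_quotient_generated_by_coset:
  assumes M: "maximal_subgroup H G" and x: "x \<in> carrier G" "x \<notin> H"
  shows "carrier (G Mod H) = range (\<lambda>k::int. (H #> x) [^]\<^bsub>G Mod H\<^esub> k)"
proof -
  interpret Q: group "G Mod H"
    by (rule factorgroup_is_group)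
  define a where "a = H #> x"
  have a: "a \<in> carrier (G Mod H)"
    using x unfolding a_def FactGroup_def RCOSETS_def by auto
  define A where "A = carrier (subgroup_generated (G Mod H) {a})"
  have A: "subgroup A (G Mod H)"
    unfolding A_def by (rule Q.subgroup_subgroup_generated)
  have A_powers: "A = range (\<lambda>k::int. a [^]\<^bsub>G Mod H\<^esub> k)"
    unfolding A_def by (rule Q.carrier_subgroup_generated_by_singleton[OF a])
  define U where "U = {y \<in> carrier G. H #> y \<in> A}"
  have U: "subgroup U G"
    unfolding U_def
    using factgroup_subgroup_union_subgroup[OF A] factgroup_subgroup_union_char[OF A] by simp
  have "H #> h \<in> A" if "h \<in> H" for h
    using rcos_const[OF is_group that] subgroup.one_closed[OF A] by simp
  then have "H \<subseteq> U"
    unfolding U_def by auto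
  moreover have "x \<in> U"
    unfolding U_def A_powers a_def using x a a_def by (auto intro: range_eqI[of _ _ "1::int"])
  ultimately have "U = carrier G"
    using M x unfolding maximal_subgroup_def by (metis U)
  then have "carrier (G Mod H) \<subseteq> A"
    unfolding U_def FactGroup_def RCOSETS_def by auto
  moreover have "A \<subseteq> carrier (G Mod H)"
    using A subgroup.subset by blast
  ultimately show ?thesis
    unfolding A_powers a_def by blast
qed

lemma (in normal) localization_maximal_normal_ord_dvd_index:
  assumes L: "inclusion_is_localization H G" and M: "maximal_subgroup H G"
    and g: "g \<in> carrier G" "ord g dvd card (rcosets H)"
  shows "g = \<one>"
proof -
  interpret Q: group "G Mod H"
    by (rule factorgroup_is_group)
  obtain x where x: "x \<in> carrier G" "x \<notin> H"
    using M subset unfolding maximal_subgroup_def by blast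
  define a where "a = H #> x"
  have a: "a \<in> carrier (G Mod H)"
    using x unfolding a_def FactGroup_def RCOSETS_def by auto
  have gen: "carrier (G Mod H) = range (\<lambda>k::int. a [^]\<^bsub>G Mod H\<^esub> k)"
    unfolding a_def by (rule maximal_quotient_generated_by_coset[OF M x])
  \<comment> \<open>No finiteness needed: for infinite index both sides are \<open>0\<close>.\<close>
  have "Q.ord a = card (rcosets H)"
    using Q.cyclic_order_is_ord[OF a] Q.carrier_subgroup_generated_by_singleton[OF a] gen
    by (simp add: order_def FactGroup_def)
  then obtain f where f: "f \<in> hom (G Mod H) G" "f a = g"
    using Q.cyclic_group_hom_exists[OF is_group a gen g(1)] g(2) by metis
  define \<psi> where "\<psi> = f \<circ> (\<lambda>y. H #> y)"
  have \<psi>: "\<psi> \<in> hom G G"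
    unfolding \<psi>_def using r_coset_hom_Mod f(1) by (rule Group.hom_compose)
  have trivial: "(\<lambda>_. \<one>) \<in> hom G G"
    by (auto simp: hom_def)
  have "\<psi> h = \<one>" if "h \<in> H" for h
  proof -
    have "H #> h = \<one>\<^bsub>G Mod H\<^esub>"
      using rcos_const[OF is_group that] by (simp add: FactGroup_def)
    then show ?thesis
      unfolding \<psi>_def using hom_one[OF f(1) Q.is_group is_group] by simp
  qed
  then have "\<psi> x = \<one>"
    using localization_endomorphisms_eqI[OF L subset \<psi> trivial _ x(1)] by simp
  moreover have "\<psi> x = g"
    unfolding \<psi>_def using f(2) by (simp add: a_def)
  ultimately show ?thesis
    by simp
qed

lemma (in group) card_rcosets_proper_subgroup:
  assumes H: "subgroup H G" and proper: "H \<noteq> carrier G"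
  shows "card (rcosets H) \<noteq> 1"
proof
  assume "card (rcosets H) = 1"
  then obtain c where c: "rcosets H = {c}"
    by (rule card_1_singletonE)
  obtain x where x: "x \<in> carrier G" "x \<notin> H"
    using proper subgroup.subset[OF H] by blast
  have "H \<in> rcosets H" "H #> x \<in> rcosets H"
    using subgroup.subgroup_in_rcosets[OF H is_group] rcosetsI[OF subgroup.subset[OF H] x(1)] .
  then have "H #> x = H"
    using c by simp
  then show False
    using rcos_self[OF x(1) H] x(2) by simp
qed

lemma (in group) localization_normal_Int_trivial:
  assumes L: "inclusion_is_localization H G" and M: "maximal_subgroup H G"
    and N: "N \<lhd> G" and NH: "N \<inter> H = {\<one>}"
  shows "N = {\<one>}"
proof -
  interpret N: normal N G by fact
  have H: "subgroup H G"
    using M unfolding maximal_subgroup_def by blast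
  have product: "n \<otimes> h \<in> N <#> H" if "n \<in> N" "h \<in> H" for n h
    using that unfolding set_mult_def by blast
  have N_NH: "N \<subseteq> N <#> H"
  proof
    fix n assume "n \<in> N"
    then show "n \<in> N <#> H"
      using product[of n \<one>] subgroup.one_closed[OF H] by simp
  qed
  have H_NH: "H \<subseteq> N <#> H"
  proof
    fix h assume "h \<in> H"
    then show "h \<in> N <#> H"
      using product[of \<one> h] subgroup.mem_carrier[OF H] by simp
  qed
  have "N <#> H = H \<or> N <#> H = carrier G"
    using M mult_norm_subgroup[OF N H] H_NH unfolding maximal_subgroup_def by blast
  then show ?thesis
  proof
    assume "N <#> H = H"
    then show ?thesis
      using N_NH NH by blast
  next
    assume "N <#> H = carrier G"
    then show ?thesis
      by (rule localization_normal_complement_trivial[OF L H N NH])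
  qed
qed

theorem proposition4p1:
  fixes G :: "('a, 'b) monoid_scheme" and H :: "'a set" and p :: nat
  assumes "group G"
    and "maximal_subgroup H G"
    and "is_simple_group (G\<lparr>carrier := H\<rparr>)"
    and "\<not> comm_group (G\<lparr>carrier := H\<rparr>)"
    and "finite (rcosets\<^bsub>G\<^esub> H)"
    and "card (rcosets\<^bsub>G\<^esub> H) = p"
    and "\<exists>g \<in> carrier G. group.ord G g = p"
    and "inclusion_is_localization H G"
  shows "is_simple_group G"
proof -
  \<comment> \<open>Non-commutativity of \<open>H\<close> and finiteness of the index are not needed.\<close>
  interpret group G by fact
  have H: "subgroup H G" and proper: "H \<noteq> carrier G"
    using assms(2) unfolding maximal_subgroup_def by blast+
  obtain g where g: "g \<in> carrier G" "ord g = card (rcosets\<^bsub>G\<^esub> H)"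
    using assms(6,7) by blast
  have "N = {\<one>\<^bsub>G\<^esub>} \<or> N = carrier G" if N: "N \<lhd> G" for N
  proof -
    have "N \<inter> H = {\<one>\<^bsub>G\<^esub>} \<or> N \<inter> H = H"
      using assms(3) normal_Int_subgroup[OF H N] unfolding is_simple_group_def by simp
    moreover have "N \<noteq> H"
    proof
      assume "N = H"
      then have "g = \<one>\<^bsub>G\<^esub>"
        using normal.localization_maximal_normal_ord_dvd_index[OF _ assms(8,2) g(1)] N g(2) by simp
      then show False
        using g(2) card_rcosets_proper_subgroup[OF H proper] by simp
    qed
    ultimately show ?thesis
      using localization_normal_Int_trivial[OF assms(8,2) N] assms(2) normal_imp_subgroup[OF N]
      unfolding maximal_subgroup_def by blast
  qed
  moreover have "carrier G \<noteq> {\<one>\<^bsub>G\<^esub>}"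
    using proper subgroup.subset[OF H] subgroup.one_closed[OF H] by auto
  ultimately show ?thesis
    unfolding is_simple_group_def using assms(1) by blast
qed

end
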